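(* Let $T_0,T_1\subseteq\mathbb{Z}_2^\omega$ be thin sets such that $T_0\cup T_1=\mathbb{Z}_2^\omega$. Then $T_0$ and $T_1$ are disjoint and both are xor-sets.
   Context: $\mathbb{Z}_2^\omega$ is the set of infinite binary sequences indexed by $\omega=\{0,1,2,\dots\}$. A set $T\subseteq\mathbb{Z}_2^\omega$ is thin if for every $n\in\omega$ the map $x\mapsto x|_{\omega\setminus\{n\}}$ is injective on $T$. For $x\in\mathbb{Z}_2^\omega$ and $n\in\omega$, $x^{\#n}$ is the sequence obtained from $x$ by flipping the $n$-th coordinate ($x^{\#n}(k)=x(k)$ for $k\ne n$, $x^{\#n}(n)=1-x(n)$). A set $\mathcal{X}\subseteq\mathbb{Z}_2^\omega$ is a xor-set if for every $n\in\omega$ and $x\in\mathbb{Z}_2^\omega$: $x\in\mathcal{X}\iff x^{\#n}\notin\mathcal{X}$. *)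

theory Defs
  imports Main
begin

text \<open>Elements of Z_2^omega are represented as functions nat => bool (True = 1).
  The restriction of x to omega minus n is modelled as the function on nat
  that agrees with x away from n and is undefined (a fixed dummy value) at n.\<close>

definition drop_coord :: "nat \<Rightarrow> (nat \<Rightarrow> bool) \<Rightarrow> (nat \<Rightarrow> bool option)" where
  "drop_coord n x = (\<lambda>k. if k = n then None else Some (x k))"

definition thin :: "(nat \<Rightarrow> bool) set \<Rightarrow> bool" where
  "thin T \<longleftrightarrow> (\<forall>n. inj_on (drop_coord n) T)"

definition flip :: "(nat \<Rightarrow> bool) \<Rightarrow> nat \<Rightarrow> (nat \<Rightarrow> bool)" where
  "flip x n = x(n := \<not> x n)"

definition xor_set :: "(nat \<Rightarrow> bool) set \<Rightarrow> bool" where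
  "xor_set X \<longleftrightarrow> (\<forall>n x. x \<in> X \<longleftrightarrow> flip x n \<notin> X)"

end

(* A thin set never contains both x and flip x n, since they differ only at n.
   If two thin sets cover everything, then for every x and n one of x, flip x n
   lies in T0 and the other in T1; this forces both xor properties, and a point
   of T0 \<inter> T1 would leave flip x n uncovered. *)
theory Submission
  imports Defs
begin

lemma flip_neq: "flip x n \<noteq> x"
  by (metis flip_def fun_upd_same)

lemma flip_flip [simp]: "flip (flip x n) n = x"
  by (auto simp: flip_def)

lemma drop_coord_flip [simp]: "drop_coord n (flip x n) = drop_coord n x"
  by (auto simp: drop_coord_def flip_def)

lemma thin_flip_notin:
  assumes "thin T" and "x \<in> T"
  shows "flip x n \<notin> T"
  using assms flip_neq unfolding thin_def inj_on_def by (metis drop_coord_flip)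

lemma xor_set_if_thin_cover:
  assumes "thin T" and "thin S" and "T \<union> S = UNIV"
  shows "xor_set T"
  unfolding xor_set_def
proof (intro allI iffI)
  fix n x
  show "flip x n \<notin> T" if "x \<in> T"
    using thin_flip_notin[OF assms(1) that] .
  show "x \<in> T" if "flip x n \<notin> T"
  proof (rule ccontr)
    assume "x \<notin> T"
    then have "x \<in> S" using assms(3) by blast
    then have "flip x n \<notin> S" using thin_flip_notin[OF assms(2)] by blast
    then show False using that assms(3) by blast
  qed
qed

lemma disjoint_if_thin_cover:
  assumes "thin T" and "thin S" and "T \<union> S = UNIV"
  shows "T \<inter> S = {}"
proof (rule ccontr)
  assume "T \<inter> S \<noteq> {}"
  then obtain x where "x \<in> T" "x \<in> S" by blast
  then have "flip x 0 \<notin> T \<union> S"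
    using thin_flip_notin assms(1,2) by blast
  then show False using assms(3) by blast
qed

theorem proposition15:
  fixes T0 T1 :: "(nat \<Rightarrow> bool) set"
  assumes "thin T0" and "thin T1" and "T0 \<union> T1 = UNIV"
  shows "T0 \<inter> T1 = {} \<and> xor_set T0 \<and> xor_set T1"
proof -
  have "T1 \<union> T0 = UNIV" using assms(3) by blast
  then show ?thesis
    using assms disjoint_if_thin_cover xor_set_if_thin_cover by blast
qed

end
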